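(* Let $\zeta\in\mathbb{C}$, $m\ge1$, and let $H_{2m}(w_1,\ldots,w_{2m})$ be the rational function \[ H_{2m}(w_1,\ldots,w_{2m})=\frac{\prod_{i=1}^m\prod_{j=m+1}^{2m}h(w_i,w_j)}{\prod_{1\le i<j\le m}(w_i-w_j)\prod_{m+1\le i<j\le 2m}(w_i-w_j)}\ \det_{1\le i\le m,\ m+1\le j\le 2m}\frac{1}{h(w_i,w_j)}, \] where $h(w,w')=1-(3+\zeta^2)ww'+(1-\zeta^2)ww'(w+w')$. Then $H_{2m}$ is a symmetric function of all $2m$ variables $w_1,\ldots,w_{2m}$ (not only separately symmetric in $\{w_1,\ldots,w_m\}$ and in $\{w_{m+1},\ldots,w_{2m}\}$).
   Context: The determinant is of the $m\times m$ matrix with rows $i=1,\ldots,m$ and columns $j=m+1,\ldots,2m$. *)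

theory Defs
  imports "Jordan_Normal_Form.Determinant" "HOL-Combinatorics.Permutations"
begin

definition hfun :: "complex \<Rightarrow> complex \<Rightarrow> complex \<Rightarrow> complex" where
  "hfun \<zeta> w w' = 1 - (3 + \<zeta>^2) * w * w' + (1 - \<zeta>^2) * w * w' * (w + w')"

text \<open>The determinant is of the m x m matrix with rows i = 1..m and columns j = m+1..2m
  (shifted to 0-based matrix indices).\<close>
definition Hfun :: "complex \<Rightarrow> nat \<Rightarrow> (nat \<Rightarrow> complex) \<Rightarrow> complex" where
  "Hfun \<zeta> m w =
     (\<Prod>i\<in>{1..m}. \<Prod>j\<in>{m+1..2*m}. hfun \<zeta> (w i) (w j))
     / ((\<Prod>i\<in>{1..m}. \<Prod>j\<in>{i+1..m}. (w i - w j))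
        * (\<Prod>i\<in>{m+1..2*m}. \<Prod>j\<in>{i+1..2*m}. (w i - w j)))
     * det (mat m m (\<lambda>(i, j). 1 / hfun \<zeta> (w (i + 1)) (w (m + j + 1))))"

definition H_defined :: "complex \<Rightarrow> nat \<Rightarrow> (nat \<Rightarrow> complex) \<Rightarrow> bool" where
  "H_defined \<zeta> m w \<longleftrightarrow>
     (\<forall>i\<in>{1..m}. \<forall>j\<in>{m+1..2*m}. hfun \<zeta> (w i) (w j) \<noteq> 0) \<and>
     (\<forall>i\<in>{1..m}. \<forall>j\<in>{1..m}. i \<noteq> j \<longrightarrow> w i \<noteq> w j) \<and>
     (\<forall>i\<in>{m+1..2*m}. \<forall>j\<in>{m+1..2*m}. i \<noteq> j \<longrightarrow> w i \<noteq> w j)"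

end

theory Submission
  imports Defs
begin

text \<open>
  Write x_i = w_i (first group), y_j = w_{m+j} (second group) and
  T(a) = (1 + (3+zeta^2) a^2 - (1-zeta^2) a^3) / a. The kernel factors as
  (a - b) h(a,b) = a b (T(b) - T(a)), so 1/h(x_i,y_j) is, up to row and column factors, the
  Cauchy-like entry (y_j - x_i)/(T(y_j) - T(x_i)). A Borchardt-type identity evaluates such
  determinants by a 2m x 2m block Vandermonde determinant, and assembling all factors gives,
  at generic points,
     H * Delta(w) * prod_k w_k = sign * (prod_k w_k)^m * det [T(w_c)^r ; w_c T(w_c)^r],
  where Delta is the Vandermonde product of all 2m variables. The right-hand determinant has one
  column per variable, so both it and Delta change by sign(p) under a permutation p; hence H is
  symmetric at generic points. Generic points are dense along lines and H is continuous where
  it is defined, which gives symmetry everywhere.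
\<close>

lemma det_mat_scale:
  fixes A :: "nat \<Rightarrow> nat \<Rightarrow> 'a::comm_ring_1"
  shows "det (mat n n (\<lambda>(i,j). f i * g j * A i j)) =
    (\<Prod>i\<in>{0..<n}. f i) * (\<Prod>j\<in>{0..<n}. g j) * det (mat n n (\<lambda>(i,j). A i j))"
proof -
  have "signof p * (\<Prod>i\<in>{0..<n}. f i * g (p i) * A i (p i)) =
      (\<Prod>i\<in>{0..<n}. f i) * (\<Prod>j\<in>{0..<n}. g j) * (signof p * (\<Prod>i\<in>{0..<n}. A i (p i)))"
    if p: "p permutes {0..<n}" for p
  proof -
    have "(\<Prod>i\<in>{0..<n}. g (p i)) = (\<Prod>j\<in>{0..<n}. g j)"
      using prod.permute[OF p, of g] by (simp add: comp_def)
    thus ?thesis by (simp add: prod.distrib algebra_simps)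
  qed
  hence "det (mat n n (\<lambda>(i,j). f i * g j * A i j)) =
      (\<Sum>p\<in>{p. p permutes {0..<n}}. (\<Prod>i\<in>{0..<n}. f i) * (\<Prod>j\<in>{0..<n}. g j) *
        (signof p * (\<Prod>i\<in>{0..<n}. A i (p i))))"
    by (subst det_def'[of _ n]) (auto intro!: sum.cong)
  thus ?thesis by (subst det_def'[of _ n]) (auto simp: sum_distrib_left)
qed

lemma det_permute_cols:
  assumes A: "A \<in> carrier_mat n n" and p: "p permutes {0..<n}"
  shows "det (mat n n (\<lambda>(i,j). A $$ (i, p j))) = signof p * det A"
proof -
  have "mat n n (\<lambda>(i,j). A $$ (i, p j)) = (mat n n (\<lambda>(i,j). A\<^sup>T $$ (p i, j)))\<^sup>T"
    using A permutes_in_image[OF p] by (intro eq_matI) auto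
  hence "det (mat n n (\<lambda>(i,j). A $$ (i, p j))) = det (mat n n (\<lambda>(i,j). A\<^sup>T $$ (p i, j)))"
    by (simp add: det_transpose[of _ n])
  also have "\<dots> = signof p * det A"
    using det_permute_rows[of "A\<^sup>T" n p] A p by (simp add: det_transpose)
  finally show ?thesis .
qed

lemma det_diagonal:
  assumes A: "A \<in> carrier_mat n n"
    and diag: "\<And>i j. i < n \<Longrightarrow> j < n \<Longrightarrow> i \<noteq> j \<Longrightarrow> A $$ (i,j) = 0"
  shows "det A = (\<Prod>i\<in>{0..<n}. A $$ (i,i))"
proof -
  have "upper_triangular A" using A diag by (auto simp: upper_triangular_def)
  thus ?thesis using det_upper_triangular[OF _ A] A by (simp add: prod_list_diag_prod)
qed

lemma prod_triangle_swap:
  "(\<Prod>j\<in>{0..<n}. \<Prod>k\<in>{Suc j..<n}. f j k) = (\<Prod>k\<in>{0..<n}. \<Prod>j\<in>{0..<k}. f j k)"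
proof -
  have "(\<Prod>j\<in>{0..<n}. \<Prod>k\<in>{Suc j..<n}. f j k) = (\<Prod>(j,k)\<in>Sigma {0..<n} (\<lambda>j. {Suc j..<n}). f j k)"
    by (rule prod.Sigma) auto
  also have "\<dots> = (\<Prod>(k,j)\<in>Sigma {0..<n} (\<lambda>k. {0..<k}). f j k)"
    by (rule prod.reindex_bij_witness[where i="\<lambda>(k,j). (j,k)" and j="\<lambda>(j,k). (k,j)"]) auto
  also have "\<dots> = (\<Prod>k\<in>{0..<n}. \<Prod>j\<in>{0..<k}. f j k)"
    by (rule prod.Sigma[symmetric]) auto
  finally show ?thesis .
qed

text \<open>The sign (-1)^(n choose 2), picked up when all factors of a difference product are reversed.\<close>
definition tri_sign :: "nat \<Rightarrow> 'a::comm_ring_1" where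
  "tri_sign n = (\<Prod>j\<in>{0..<n}. \<Prod>i\<in>{0..<j}. -1)"

definition vdm_prod :: "nat \<Rightarrow> (nat \<Rightarrow> 'a::comm_ring_1) \<Rightarrow> 'a" where
  "vdm_prod n u = (\<Prod>j\<in>{0..<n}. \<Prod>i\<in>{0..<j}. (u j - u i))"

lemma tri_sign_square: "tri_sign n * tri_sign n = (1::'a::comm_ring_1)"
  unfolding tri_sign_def prod.distrib[symmetric] by simp

lemma vdm_prod_nonzero:
  fixes u :: "nat \<Rightarrow> 'a::idom"
  assumes "\<And>i j. i < n \<Longrightarrow> j < n \<Longrightarrow> i \<noteq> j \<Longrightarrow> u i \<noteq> u j"
  shows "vdm_prod n u \<noteq> 0"
  unfolding vdm_prod_def using assms by (auto simp: prod_zero_iff)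

lemma prod_upper_pairs:
  "(\<Prod>i\<in>{0..<n}. \<Prod>j\<in>{Suc i..<n}. (x i - x j)) = tri_sign n * vdm_prod n x"
proof -
  have "(\<Prod>i\<in>{0..<n}. \<Prod>j\<in>{Suc i..<n}. (x i - x j)) = (\<Prod>j\<in>{0..<n}. \<Prod>i\<in>{0..<j}. (x i - x j))"
    by (rule prod_triangle_swap)
  also have "\<dots> = (\<Prod>j\<in>{0..<n}. \<Prod>i\<in>{0..<j}. (-1) * (x j - x i))"
    by (intro prod.cong refl) (simp add: algebra_simps)
  also have "\<dots> = tri_sign n * vdm_prod n x"
    unfolding tri_sign_def vdm_prod_def prod.distrib ..
  finally show ?thesis .
qed

lemma prod_off_diagonal:
  fixes u :: "nat \<Rightarrow> 'a::comm_ring_1"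
  shows "(\<Prod>j\<in>{0..<n}. \<Prod>k\<in>{0..<n}-{j}. (u j - u k)) = tri_sign n * (vdm_prod n u * vdm_prod n u)"
proof -
  have "{0..<n}-{j} = {0..<j} \<union> {Suc j..<n}" if "j < n" for j using that by auto
  hence "(\<Prod>j\<in>{0..<n}. \<Prod>k\<in>{0..<n}-{j}. (u j - u k)) =
      (\<Prod>j\<in>{0..<n}. (\<Prod>k\<in>{0..<j}. (u j - u k)) * (\<Prod>k\<in>{Suc j..<n}. (u j - u k)))"
    by (intro prod.cong refl) (simp add: prod.union_disjoint)
  also have "\<dots> = vdm_prod n u * (\<Prod>j\<in>{0..<n}. \<Prod>k\<in>{Suc j..<n}. (u j - u k))"
    by (simp add: prod.distrib vdm_prod_def)
  also have "(\<Prod>j\<in>{0..<n}. \<Prod>k\<in>{Suc j..<n}. (u j - u k)) = tri_sign n * vdm_prod n u"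
    by (rule prod_upper_pairs)
  finally show ?thesis by (simp add: algebra_simps)
qed

lemma vdm_prod_append:
  "vdm_prod (n+n) z = vdm_prod n z * (\<Prod>j\<in>{0..<n}. \<Prod>i\<in>{0..<n}. (z (n+j) - z i)) * vdm_prod n (\<lambda>j. z (n+j))"
proof -
  have inner: "(\<Prod>i\<in>{0..<n+j}. (z (n+j) - z i)) =
      (\<Prod>i\<in>{0..<n}. (z (n+j) - z i)) * (\<Prod>i\<in>{0..<j}. (z (n+j) - z (n+i)))" for j
  proof -
    have "(\<Prod>i\<in>{0..<n+j}. (z (n+j) - z i)) = (\<Prod>i\<in>{0..<n}. (z (n+j) - z i)) * (\<Prod>i\<in>{n..<n+j}. (z (n+j) - z i))"
      by (rule prod.atLeastLessThan_concat[symmetric]) auto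
    also have "(\<Prod>i\<in>{n..<n+j}. (z (n+j) - z i)) = (\<Prod>i\<in>{0..<j}. (z (n+j) - z (n+i)))"
      using prod.shift_bounds_nat_ivl[of "\<lambda>i. z (n+j) - z i" 0 n j] by (simp add: add.commute)
    finally show ?thesis .
  qed
  have "vdm_prod (n+n) z = vdm_prod n z * (\<Prod>j\<in>{n..<n+n}. \<Prod>i\<in>{0..<j}. (z j - z i))"
    unfolding vdm_prod_def by (rule prod.atLeastLessThan_concat[symmetric]) auto
  also have "(\<Prod>j\<in>{n..<n+n}. \<Prod>i\<in>{0..<j}. (z j - z i)) = (\<Prod>j\<in>{0..<n}. \<Prod>i\<in>{0..<n+j}. (z (n+j) - z i))"
    using prod.shift_bounds_nat_ivl[of "\<lambda>j. \<Prod>i\<in>{0..<j}. (z j - z i)" 0 n n] by (simp add: add.commute)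
  also have "\<dots> = (\<Prod>j\<in>{0..<n}. \<Prod>i\<in>{0..<n}. (z (n+j) - z i)) * vdm_prod n (\<lambda>j. z (n+j))"
    unfolding inner prod.distrib vdm_prod_def ..
  finally show ?thesis by (simp add: mult.assoc)
qed

lemma prod_cross_differences:
  fixes z :: "nat \<Rightarrow> 'a::comm_ring_1"
  shows "(\<Prod>j\<in>{0..<n}. \<Prod>i\<in>{0..<n}. (z (n+j) - z i)) =
    (-1)^(n*n) * (\<Prod>i\<in>{0..<n}. \<Prod>j\<in>{0..<n}. (z i - z (n+j)))"
proof -
  have "(\<Prod>j\<in>{0..<n}. \<Prod>i\<in>{0..<n}. (z (n+j) - z i)) = (\<Prod>i\<in>{0..<n}. \<Prod>j\<in>{0..<n}. (z (n+j) - z i))"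
    by (rule prod.swap)
  also have "\<dots> = (\<Prod>i\<in>{0..<n}. \<Prod>j\<in>{0..<n}. (-1) * (z i - z (n+j)))"
    by (intro prod.cong refl) simp
  also have "\<dots> = (-1)^(n*n) * (\<Prod>i\<in>{0..<n}. \<Prod>j\<in>{0..<n}. (z i - z (n+j)))"
    by (simp only: prod.distrib prod_constant card_atLeastLessThan diff_zero power_mult)
  finally show ?thesis .
qed

definition vdm :: "nat \<Rightarrow> (nat \<Rightarrow> 'a::comm_ring_1) \<Rightarrow> 'a mat" where
  "vdm n u = mat n n (\<lambda>(i,j). u j ^ i)"

text \<open>One elimination step: subtracting u 0 times each row from the next one clears the first
  column, and the remaining block is a Vandermonde matrix with scaled columns.\<close>
lemma det_vdm_step:
  fixes u :: "nat \<Rightarrow> 'a::idom"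
  shows "det (vdm (Suc n) u) = (\<Prod>j\<in>{0..<n}. (u (Suc j) - u 0)) * det (vdm n (u \<circ> Suc))"
proof -
  define L :: "'a mat" where
    "L = mat (Suc n) (Suc n) (\<lambda>(i,j). if i = j then 1 else if i = Suc j then - u 0 else 0)"
  define W where "W = mat (Suc n) (Suc n) (\<lambda>(i,j). if i = 0 then 1 else (u j - u 0) * u j ^ (i - 1))"
  define W' where "W' = mat n n (\<lambda>(i,j). (u (Suc j) - u 0) * u (Suc j) ^ i)"
  have Lc: "L \<in> carrier_mat (Suc n) (Suc n)" by (simp add: L_def)
  have detL: "det L = 1"
    using det_lower_triangular[OF _ Lc] by (simp add: L_def prod_list_diag_prod)
  have LV: "L * vdm (Suc n) u = W"
  proof (rule eq_matI)
    fix i j assume "i < dim_row W" and "j < dim_col W"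
    hence i: "i < Suc n" and j: "j < Suc n" by (auto simp: W_def)
    have "(L * vdm (Suc n) u) $$ (i,j) = (\<Sum>k\<in>{0..<Suc n}. L $$ (i,k) * u j ^ k)"
      using i j by (simp add: L_def vdm_def scalar_prod_def)
    also have "\<dots> = (\<Sum>k\<in>{0..<Suc n}. (if k = i then u j ^ k else 0) + (if Suc k = i then - u 0 * u j ^ k else 0))"
      by (rule sum.cong) (use i in \<open>auto simp: L_def\<close>)
    also have "\<dots> = u j ^ i + (if i = 0 then 0 else - u 0 * u j ^ (i - 1))"
      using i by (cases i) (auto simp: sum.distrib)
    also have "\<dots> = W $$ (i,j)"
      using i j by (cases i) (auto simp: W_def algebra_simps)
    finally show "(L * vdm (Suc n) u) $$ (i,j) = W $$ (i,j)" .
  qed (auto simp: W_def L_def vdm_def)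
  have W_block: "W = four_block_mat (mat 1 1 (\<lambda>_. 1)) (mat 1 n (\<lambda>_. 1)) (0\<^sub>m n 1) W'"
    by (rule eq_matI) (auto simp: W_def W'_def four_block_mat_def)
  have "det W = det (mat 1 1 (\<lambda>_. 1::'a)) * det W'"
    unfolding W_block by (rule det_four_block_mat_lower_left_zero) (auto simp: W'_def)
  also have "det (mat 1 1 (\<lambda>_. 1::'a)) = 1" by (simp add: det_single)
  also have "det W' = (\<Prod>j\<in>{0..<n}. (u (Suc j) - u 0)) * det (vdm n (u \<circ> Suc))"
    using det_mat_scale[where f="\<lambda>_. 1" and g="\<lambda>j. u (Suc j) - u 0" and A="\<lambda>i j. u (Suc j) ^ i" and n=n]
    by (simp add: W'_def vdm_def)
  moreover have "det W = det (vdm (Suc n) u)"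
    using det_mult[OF Lc, of "vdm (Suc n) u"] LV detL by (simp add: vdm_def)
  ultimately show ?thesis by simp
qed

lemma det_vdm:
  fixes u :: "nat \<Rightarrow> 'a::idom"
  shows "det (vdm n u) = vdm_prod n u"
proof (induction n arbitrary: u)
  case 0
  then show ?case by (simp add: vdm_def vdm_prod_def)
next
  case (Suc n)
  have "det (vdm (Suc n) u) = (\<Prod>j\<in>{0..<n}. (u (Suc j) - u 0)) *
      (\<Prod>j\<in>{0..<n}. \<Prod>i\<in>{0..<j}. (u (Suc j) - u (Suc i)))"
    using Suc.IH[of "u \<circ> Suc"] unfolding det_vdm_step by (simp add: vdm_prod_def comp_def)
  also have "\<dots> = (\<Prod>j\<in>{0..<n}. \<Prod>i\<in>{0..<Suc j}. (u (Suc j) - u i))"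
    by (simp only: prod.atLeast0_lessThan_Suc_shift prod.distrib comp_def)
  also have "\<dots> = vdm_prod (Suc n) u"
    unfolding vdm_prod_def
    by (simp only: prod.atLeast0_lessThan_Suc_shift[of "\<lambda>j. \<Prod>i\<in>{0..<j}. (u j - u i)"]) (simp add: comp_def)
  finally show ?case .
qed

text \<open>The node polynomial prod_{k \<noteq> j} (X - u k): it vanishes at every node except u j.
  Its coefficient vectors row-reduce Vandermonde-type matrices.\<close>
definition node_poly :: "nat \<Rightarrow> (nat \<Rightarrow> 'a::comm_ring_1) \<Rightarrow> nat \<Rightarrow> 'a poly" where
  "node_poly n u j = (\<Prod>k\<in>{0..<n}-{j}. [:- u k, 1:])"

lemma degree_node_poly:
  fixes u :: "nat \<Rightarrow> 'a::comm_ring_1"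
  assumes "j < n" shows "degree (node_poly n u j) < n"
proof -
  have "degree (node_poly n u j) \<le> sum (degree \<circ> (\<lambda>k. [:- u k, 1:])) ({0..<n}-{j})"
    unfolding node_poly_def by (rule degree_prod_sum_le) auto
  also have "\<dots> \<le> (\<Sum>k\<in>{0..<n}-{j}. 1)" by (rule sum_mono) auto
  finally show ?thesis using assms by simp
qed

text \<open>Since its degree is below n, the first n coefficients of a node polynomial already evaluate it.\<close>
lemma node_poly_eval:
  fixes u :: "nat \<Rightarrow> 'a::comm_ring_1"
  assumes "j < n"
  shows "(\<Sum>s\<in>{0..<n}. coeff (node_poly n u j) s * z ^ s) = (\<Prod>k\<in>{0..<n}-{j}. (z - u k))"
proof -
  have "(\<Sum>s\<in>{0..<n}. coeff (node_poly n u j) s * z ^ s) = (\<Sum>s\<le>degree (node_poly n u j). coeff (node_poly n u j) s * z ^ s)"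
    by (rule sum.mono_neutral_right) (use degree_node_poly[OF assms, of u] in \<open>auto simp: coeff_eq_0\<close>)
  also have "\<dots> = poly (node_poly n u j) z" by (rule poly_altdef[symmetric])
  finally show ?thesis by (simp add: node_poly_def poly_prod)
qed

lemma node_coeffs_times_powers:
  fixes u :: "nat \<Rightarrow> 'a::comm_ring_1"
  assumes j: "j < dim_row A" "j < n" and c: "c < dim_col B"
    and A: "dim_col A = n" "\<And>s. s < n \<Longrightarrow> A $$ (j,s) = b * coeff (node_poly n u j) s"
    and B: "dim_row B = n" "\<And>s. s < n \<Longrightarrow> B $$ (s,c) = a * v ^ s"
  shows "(A * B) $$ (j,c) = b * a * (\<Prod>k\<in>{0..<n}-{j}. (v - u k))"
proof -
  have "(A * B) $$ (j,c) = (\<Sum>s\<in>{0..<n}. b * coeff (node_poly n u j) s * (a * v ^ s))"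
    using j c A B by (simp add: scalar_prod_def)
  also have "\<dots> = b * a * (\<Sum>s\<in>{0..<n}. coeff (node_poly n u j) s * v ^ s)"
    by (simp add: sum_distrib_left mult_ac)
  finally show ?thesis by (simp only: node_poly_eval[OF j(2)])
qed

text \<open>The matrix of coefficients of the node polynomials turns the Vandermonde matrix into a diagonal
  one; comparing determinants gives its determinant.\<close>
lemma det_node_coeffs:
  fixes u :: "nat \<Rightarrow> 'a::idom"
  assumes dist: "\<And>i j. i < n \<Longrightarrow> j < n \<Longrightarrow> i \<noteq> j \<Longrightarrow> u i \<noteq> u j"
  shows "det (mat n n (\<lambda>(j,s). coeff (node_poly n u j) s)) = tri_sign n * vdm_prod n u"
proof -
  define K where "K = mat n n (\<lambda>(j,s). coeff (node_poly n u j) s)"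
  define D where "D = mat n n (\<lambda>(j,c). \<Prod>k\<in>{0..<n}-{j}. (u c - u k))"
  have KV: "K * vdm n u = D"
  proof (rule eq_matI)
    fix j c assume "j < dim_row D" "c < dim_col D"
    thus "(K * vdm n u) $$ (j,c) = D $$ (j,c)"
      using node_coeffs_times_powers[where A=K and B="vdm n u" and a=1 and b=1 and v="u c" and u=u]
      by (simp add: K_def D_def vdm_def)
  qed (auto simp: K_def D_def vdm_def)
  have "det K * det (vdm n u) = det D"
    using det_mult[of K n "vdm n u"] KV by (simp add: K_def vdm_def)
  also have "det D = (\<Prod>j\<in>{0..<n}. D $$ (j,j))"
    by (rule det_diagonal) (auto simp: D_def prod_zero_iff)
  also have "\<dots> = (\<Prod>j\<in>{0..<n}. \<Prod>k\<in>{0..<n}-{j}. (u j - u k))" by (simp add: D_def)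
  also have "\<dots> = tri_sign n * vdm_prod n u * vdm_prod n u" by (simp add: prod_off_diagonal mult.assoc)
  finally have "det K * vdm_prod n u = tri_sign n * vdm_prod n u * vdm_prod n u" by (simp add: det_vdm)
  moreover have "vdm_prod n u \<noteq> 0" by (rule vdm_prod_nonzero) (use dist in auto)
  ultimately show ?thesis unfolding K_def by simp
qed

definition block_vdm ::
  "nat \<Rightarrow> (nat \<Rightarrow> 'a::comm_ring_1) \<Rightarrow> (nat \<Rightarrow> 'a) \<Rightarrow> (nat \<Rightarrow> 'a) \<Rightarrow> (nat \<Rightarrow> 'a) \<Rightarrow> 'a mat" where
  "block_vdm n t u x y = four_block_mat
     (mat n n (\<lambda>(r,c). u c ^ r)) (mat n n (\<lambda>(r,c). t c ^ r))
     (mat n n (\<lambda>(r,c). y c * u c ^ r)) (mat n n (\<lambda>(r,c). x c * t c ^ r))"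

text \<open>The lower row of the block product [[K, 0], [-diag(y) K, K]] * block_vdm, computed for one
  column block: K is the coefficient matrix of the node polynomials of u, the column block has
  nodes v and lower weights a.\<close>
lemma node_coeffs_lower_block:
  fixes u v a y :: "nat \<Rightarrow> 'a::comm_ring_1"
  shows "mat n n (\<lambda>(j,s). - y j * coeff (node_poly n u j) s) * mat n n (\<lambda>(r,c). v c ^ r)
      + mat n n (\<lambda>(j,s). coeff (node_poly n u j) s) * mat n n (\<lambda>(r,c). a c * v c ^ r)
    = mat n n (\<lambda>(j,c). (a c - y j) * (\<Prod>k\<in>{0..<n}-{j}. (v c - u k)))"
    (is "?K' * ?V + ?K * ?V' = ?R")
proof (rule eq_matI)
  fix j c assume "j < dim_row ?R" "c < dim_col ?R"
  hence jc: "j < n" "c < n" by auto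
  have "(?K' * ?V + ?K * ?V') $$ (j,c) =
      - y j * 1 * (\<Prod>k\<in>{0..<n}-{j}. (v c - u k)) + 1 * a c * (\<Prod>k\<in>{0..<n}-{j}. (v c - u k))"
    using jc node_coeffs_times_powers[where A="?K'" and B="?V" and b="- y j" and a=1 and v="v c" and u=u]
      node_coeffs_times_powers[where A="?K" and B="?V'" and b=1 and a="a c" and v="v c" and u=u]
    by simp
  thus "(?K' * ?V + ?K * ?V') $$ (j,c) = ?R $$ (j,c)" using jc by (simp add: algebra_simps)
qed auto

text \<open>Reduction of the block matrix to an n x n determinant: multiplying on the left by
  [[K, 0], [-diag(y) K, K]] makes the lower left block vanish, since the node polynomial of j
  vanishes at all nodes u c with c \<noteq> j.\<close>
lemma det_block_vdm:
  fixes t u x y :: "nat \<Rightarrow> 'a::idom"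
  assumes dist: "\<And>i j. i < n \<Longrightarrow> j < n \<Longrightarrow> i \<noteq> j \<Longrightarrow> u i \<noteq> u j"
  shows "det (block_vdm n t u x y) =
    tri_sign n * det (mat n n (\<lambda>(i,j). (x i - y j) * (\<Prod>k\<in>{0..<n}-{j}. (t i - u k))))"
proof -
  define K where "K = mat n n (\<lambda>(j,s). coeff (node_poly n u j) s)"
  define K' where "K' = mat n n (\<lambda>(j,s). - y j * coeff (node_poly n u j) s)"
  define U where "U = mat n n (\<lambda>(r,c). u c ^ r)"
  define T where "T = mat n n (\<lambda>(r,c). t c ^ r)"
  define U' where "U' = mat n n (\<lambda>(r,c). y c * u c ^ r)"
  define T' where "T' = mat n n (\<lambda>(r,c). x c * t c ^ r)"
  define E where "E = mat n n (\<lambda>(j,c). (x c - y j) * (\<Prod>k\<in>{0..<n}-{j}. (t c - u k)))"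
  note defs = K_def K'_def U_def T_def U'_def T'_def E_def
  have carrier: "K \<in> carrier_mat n n" "K' \<in> carrier_mat n n" "U \<in> carrier_mat n n" "T \<in> carrier_mat n n"
    "U' \<in> carrier_mat n n" "T' \<in> carrier_mat n n" "E \<in> carrier_mat n n" by (auto simp: defs)
  have "K' * U + K * U' = mat n n (\<lambda>(j,c). (y c - y j) * (\<Prod>k\<in>{0..<n}-{j}. (u c - u k)))"
    unfolding defs by (rule node_coeffs_lower_block)
  also have "\<dots> = 0\<^sub>m n n"
    using dist by (intro eq_matI) (auto simp: prod_zero_iff)
  finally have lower_left: "K' * U + K * U' = 0\<^sub>m n n" .
  have lower_right: "K' * T + K * T' = E"
    unfolding defs by (rule node_coeffs_lower_block)
  define L where "L = four_block_mat K (0\<^sub>m n n) K' K"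
  have LN: "L * block_vdm n t u x y = four_block_mat (K * U) (K * T) (0\<^sub>m n n) E"
    unfolding L_def block_vdm_def U_def[symmetric] T_def[symmetric] U'_def[symmetric] T'_def[symmetric]
    by (subst mult_four_block_mat[OF carrier(1) zero_carrier_mat carrier(2,1,3-6)])
      (use carrier lower_left lower_right in simp)
  have detK: "det K = tri_sign n * vdm_prod n u"
    unfolding K_def by (rule det_node_coeffs[OF dist])
  have detU: "det U = vdm_prod n u" using det_vdm[of n u] by (simp add: U_def vdm_def)
  have "det K * det K * det (block_vdm n t u x y) = det (K * U) * det E"
  proof -
    have "det L = det K * det K"
      unfolding L_def by (rule det_four_block_mat_upper_right_zero) (use carrier in auto)
    moreover have "det (L * block_vdm n t u x y) = det (K * U) * det E"
      unfolding LN by (rule det_four_block_mat_lower_left_zero) (use carrier in auto)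
    ultimately show ?thesis
      by (subst (asm) det_mult[of L "n+n"]) (auto simp: L_def block_vdm_def carrier)
  qed
  also have "det (K * U) = det K * vdm_prod n u" by (simp add: det_mult[OF carrier(1,3)] detU)
  finally have "det K * (det K * det (block_vdm n t u x y)) = det K * (vdm_prod n u * det E)"
    by (simp add: mult_ac)
  moreover have V: "vdm_prod n u \<noteq> 0" by (rule vdm_prod_nonzero) (use dist in auto)
  moreover have "tri_sign n \<noteq> (0::'a)" using tri_sign_square[where 'a='a, of n] by auto
  ultimately have "tri_sign n * vdm_prod n u * det (block_vdm n t u x y) = vdm_prod n u * det E"
    unfolding detK by simp
  hence "vdm_prod n u * det (block_vdm n t u x y) = vdm_prod n u * (tri_sign n * det E)"
    using tri_sign_square[where 'a='a, of n]
    by (metis (no_types, lifting) mult.assoc mult.left_commute mult_1)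
  hence "det (block_vdm n t u x y) = tri_sign n * det E" using V by simp
  moreover have "E = (mat n n (\<lambda>(i,j). (x i - y j) * (\<Prod>k\<in>{0..<n}-{j}. (t i - u k))))\<^sup>T"
    by (rule eq_matI) (auto simp: E_def)
  ultimately show ?thesis by (simp add: det_transpose[of _ n])
qed

lemma det_cauchy_like:
  fixes t u x y :: "nat \<Rightarrow> 'a::field"
  assumes dist: "\<And>i j. i < n \<Longrightarrow> j < n \<Longrightarrow> i \<noteq> j \<Longrightarrow> u i \<noteq> u j"
    and tu: "\<And>i j. i < n \<Longrightarrow> j < n \<Longrightarrow> t i \<noteq> u j"
  shows "(\<Prod>i\<in>{0..<n}. \<Prod>k\<in>{0..<n}. (t i - u k)) * det (mat n n (\<lambda>(i,j). (x i - y j) / (t i - u j)))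
    = tri_sign n * det (block_vdm n t u x y)"
proof -
  define F where "F i = (\<Prod>k\<in>{0..<n}. (t i - u k))" for i
  have "mat n n (\<lambda>(i,j). (x i - y j) * (\<Prod>k\<in>{0..<n}-{j}. (t i - u k))) =
      mat n n (\<lambda>(i,j). F i * 1 * ((x i - y j) / (t i - u j)))"
  proof (rule eq_matI)
    fix i j assume "i < dim_row (mat n n (\<lambda>(i,j). F i * 1 * ((x i - y j) / (t i - u j))))"
      "j < dim_col (mat n n (\<lambda>(i,j). F i * 1 * ((x i - y j) / (t i - u j))))"
    hence ij: "i < n" "j < n" by auto
    have "F i = (t i - u j) * (\<Prod>k\<in>{0..<n}-{j}. (t i - u k))"
      unfolding F_def using ij by (subst prod.remove[of _ j]) auto
    thus "mat n n (\<lambda>(i,j). (x i - y j) * (\<Prod>k\<in>{0..<n}-{j}. (t i - u k))) $$ (i,j) =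
        mat n n (\<lambda>(i,j). F i * 1 * ((x i - y j) / (t i - u j))) $$ (i,j)"
      using ij tu[OF ij] by simp
  qed auto
  hence "det (block_vdm n t u x y) = tri_sign n * ((\<Prod>i\<in>{0..<n}. F i) * det (mat n n (\<lambda>(i,j). (x i - y j) / (t i - u j))))"
    using det_block_vdm[OF dist] det_mat_scale[where f=F and g="\<lambda>_. 1" and A="\<lambda>i j. (x i - y j) / (t i - u j)" and n=n] by simp
  hence "tri_sign n * det (block_vdm n t u x y) =
      tri_sign n * tri_sign n * ((\<Prod>i\<in>{0..<n}. F i) * det (mat n n (\<lambda>(i,j). (x i - y j) / (t i - u j))))"
    by (simp add: mult.assoc)
  thus ?thesis by (simp add: tri_sign_square F_def)
qed

text \<open>The kernel h becomes a difference after dividing by the factor (w - w')/(w w'): with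
  T(a) = (1 + (3+zeta^2) a^2 - (1-zeta^2) a^3)/a one has (a - b) h(a,b) = a b (T(b) - T(a)).
  This is what turns the matrix (1/h) into a Cauchy-like matrix.\<close>
definition tfun :: "complex \<Rightarrow> complex \<Rightarrow> complex" where
  "tfun \<zeta> a = (1 + (3 + \<zeta>^2) * a^2 - (1 - \<zeta>^2) * a^3) / a"

lemma hfun_factor:
  assumes "a \<noteq> 0" "b \<noteq> 0"
  shows "(a - b) * hfun \<zeta> a b = a * b * (tfun \<zeta> b - tfun \<zeta> a)"
  using assms by (simp add: hfun_def tfun_def field_simps power2_eq_square power3_eq_cube)

lemma tfun_inj_on_pair:
  assumes "a \<noteq> 0" "b \<noteq> 0" "a \<noteq> b" "hfun \<zeta> a b \<noteq> 0"
  shows "tfun \<zeta> a \<noteq> tfun \<zeta> b"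
  using hfun_factor[OF assms(1,2), of \<zeta>] assms by auto

lemma inverse_hfun:
  assumes "a \<noteq> 0" "b \<noteq> 0" "a \<noteq> b" "tfun \<zeta> a \<noteq> tfun \<zeta> b"
  shows "1 / hfun \<zeta> a b = (- 1 / a) * (1 / b) * ((b - a) / (tfun \<zeta> b - tfun \<zeta> a))"
proof -
  have eq: "(a - b) * hfun \<zeta> a b = a * b * (tfun \<zeta> b - tfun \<zeta> a)" by (rule hfun_factor[OF assms(1,2)])
  hence "hfun \<zeta> a b \<noteq> 0" using assms by auto
  with eq show ?thesis using assms by (simp add: field_simps)
qed

definition H0 :: "complex \<Rightarrow> nat \<Rightarrow> (nat \<Rightarrow> complex) \<Rightarrow> complex" where
  "H0 \<zeta> n z = (\<Prod>i\<in>{0..<n}. \<Prod>j\<in>{0..<n}. hfun \<zeta> (z i) (z (n+j))) /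
     ((\<Prod>i\<in>{0..<n}. \<Prod>j\<in>{Suc i..<n}. (z i - z j)) * (\<Prod>i\<in>{0..<n}. \<Prod>j\<in>{Suc i..<n}. (z (n+i) - z (n+j))))
     * det (mat n n (\<lambda>(i,j). 1 / hfun \<zeta> (z i) (z (n+j))))"

definition generic :: "complex \<Rightarrow> nat \<Rightarrow> (nat \<Rightarrow> complex) \<Rightarrow> bool" where
  "generic \<zeta> n z \<longleftrightarrow> (\<forall>k<n+n. z k \<noteq> 0) \<and>
     (\<forall>i<n+n. \<forall>j<n+n. i \<noteq> j \<longrightarrow> z i \<noteq> z j \<and> tfun \<zeta> (z i) \<noteq> tfun \<zeta> (z j))"

text \<open>The 2n x 2n matrix with columns (T(z_c)^r)_{r<n} stacked over (z_c T(z_c)^r)_{r<n}: each column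
  depends on one variable only, so permuting the variables permutes the columns.\<close>
definition tvdm :: "complex \<Rightarrow> nat \<Rightarrow> (nat \<Rightarrow> complex) \<Rightarrow> complex mat" where
  "tvdm \<zeta> n z = mat (n+n) (n+n)
     (\<lambda>(r,c). if r < n then tfun \<zeta> (z c) ^ r else z c * tfun \<zeta> (z c) ^ (r - n))"

lemma tvdm_block_vdm:
  "tvdm \<zeta> n z = block_vdm n (\<lambda>j. tfun \<zeta> (z (n+j))) (\<lambda>i. tfun \<zeta> (z i)) (\<lambda>j. z (n+j)) z"
  by (rule eq_matI) (auto simp: tvdm_def block_vdm_def)

text \<open>At a generic point the matrix of the 1/h(x_i,y_j) is, after removing row and column factors
  and transposing, the Cauchy-like matrix in the variables T(y_j), T(x_i).\<close>
lemma det_inverse_hfun: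
  assumes G: "generic \<zeta> n z"
  shows "(\<Prod>j\<in>{0..<n}. \<Prod>i\<in>{0..<n}. (tfun \<zeta> (z (n+j)) - tfun \<zeta> (z i)))
      * det (mat n n (\<lambda>(i,j). 1 / hfun \<zeta> (z i) (z (n+j))))
      * ((\<Prod>i\<in>{0..<n}. z i) * (\<Prod>j\<in>{0..<n}. z (n+j)))
    = (-1)^n * tri_sign n * det (tvdm \<zeta> n z)"
proof -
  define y where "y = (\<lambda>j. z (n+j))"
  define u where "u = (\<lambda>i. tfun \<zeta> (z i))"
  define t where "t = (\<lambda>j. tfun \<zeta> (y j))"
  define X where "X = (\<Prod>i\<in>{0..<n}. z i)"
  define Y where "Y = (\<Prod>j\<in>{0..<n}. y j)"
  define Cm where "Cm = mat n n (\<lambda>(j,i). (y j - z i) / (t j - u i))"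
  define Pi where "Pi = (\<Prod>j\<in>{0..<n}. \<Prod>i\<in>{0..<n}. (t j - u i))"
  have z_nz: "z i \<noteq> 0" and y_nz: "y j \<noteq> 0" and zy: "z i \<noteq> y j" and ut: "u i \<noteq> t j"
    if "i < n" "j < n" for i j
    using G that unfolding generic_def y_def u_def t_def by auto
  have u_dist: "u i \<noteq> u j" if "i < n" "j < n" "i \<noteq> j" for i j
    using G that unfolding generic_def u_def by auto
  have XY: "X \<noteq> 0" "Y \<noteq> 0" using z_nz y_nz by (auto simp: X_def Y_def prod_zero_iff)
  have "det (mat n n (\<lambda>(i,j). 1 / hfun \<zeta> (z i) (y j))) =
      det (mat n n (\<lambda>(i,j). (- 1 / z i) * (1 / y j) * ((y j - z i) / (t j - u i))))"
    using z_nz y_nz zy ut by (intro arg_cong[where f=det] eq_matI) (auto simp: inverse_hfun u_def t_def)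
  also have "\<dots> = (\<Prod>i\<in>{0..<n}. - 1 / z i) * (\<Prod>j\<in>{0..<n}. 1 / y j) *
      det (mat n n (\<lambda>(i,j). (y j - z i) / (t j - u i)))"
    by (rule det_mat_scale[where A="\<lambda>i j. (y j - z i) / (t j - u i)"])
  also have "\<dots> = (-1)^n / (X * Y) * det Cm"
  proof -
    have "mat n n (\<lambda>(i,j). (y j - z i) / (t j - u i)) = Cm\<^sup>T"
      unfolding Cm_def by (rule eq_matI) auto
    moreover have "(\<Prod>i\<in>{0..<n}. - 1 / z i) = (-1)^n / X"
      unfolding X_def by (subst prod_dividef) simp
    ultimately show ?thesis by (simp add: Cm_def det_transpose[of _ n] Y_def prod_dividef)
  qed
  finally have det_M: "det (mat n n (\<lambda>(i,j). 1 / hfun \<zeta> (z i) (y j))) * (X * Y) = (-1)^n * det Cm"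
    using XY by simp
  have "tvdm \<zeta> n z = block_vdm n t u y z" unfolding tvdm_block_vdm t_def u_def y_def ..
  hence cauchy: "Pi * det Cm = tri_sign n * det (tvdm \<zeta> n z)"
    using det_cauchy_like[of n u t y z, OF u_dist ut[symmetric]] by (simp add: Cm_def Pi_def)
  have "Pi * det (mat n n (\<lambda>(i,j). 1 / hfun \<zeta> (z i) (y j))) * (X * Y) = (-1)^n * (Pi * det Cm)"
    unfolding mult.assoc[of Pi] det_M by (simp add: mult_ac)
  also have "\<dots> = (-1)^n * tri_sign n * det (tvdm \<zeta> n z)" by (simp add: cauchy)
  finally show ?thesis by (simp add: Pi_def t_def u_def y_def X_def Y_def)
qed

lemma H0_numerator:
  assumes G: "generic \<zeta> n z"
  shows "(\<Prod>i\<in>{0..<n}. \<Prod>j\<in>{0..<n}. hfun \<zeta> (z i) (z (n+j))) * det (mat n n (\<lambda>(i,j). 1 / hfun \<zeta> (z i) (z (n+j))))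
      * ((\<Prod>i\<in>{0..<n}. z i) * (\<Prod>j\<in>{0..<n}. z (n+j)) * (\<Prod>i\<in>{0..<n}. \<Prod>j\<in>{0..<n}. (z i - z (n+j))))
    = (-1)^n * (\<Prod>i\<in>{0..<n}. z i)^n * (\<Prod>j\<in>{0..<n}. z (n+j))^n * tri_sign n * det (tvdm \<zeta> n z)"
proof -
  define y where "y = (\<lambda>j. z (n+j))"
  define D where "D j i = tfun \<zeta> (y j) - tfun \<zeta> (z i)" for j i
  define X where "X = (\<Prod>i\<in>{0..<n}. z i)"
  define Y where "Y = (\<Prod>j\<in>{0..<n}. y j)"
  define dM where "dM = det (mat n n (\<lambda>(i,j). 1 / hfun \<zeta> (z i) (y j)))"
  have z_nz: "z i \<noteq> 0" and y_nz: "y j \<noteq> 0" if "i < n" "j < n" for i j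
    using G that unfolding generic_def y_def by auto
  have "(\<Prod>i\<in>{0..<n}. \<Prod>j\<in>{0..<n}. hfun \<zeta> (z i) (y j)) * (\<Prod>i\<in>{0..<n}. \<Prod>j\<in>{0..<n}. (z i - y j)) =
      (\<Prod>i\<in>{0..<n}. \<Prod>j\<in>{0..<n}. z i * y j * D j i)"
    unfolding prod.distrib[symmetric] using hfun_factor z_nz y_nz
    by (intro prod.cong refl) (simp add: D_def mult.commute)
  also have "\<dots> = (\<Prod>i\<in>{0..<n}. \<Prod>j\<in>{0..<n}. z i * y j) * (\<Prod>i\<in>{0..<n}. \<Prod>j\<in>{0..<n}. D j i)"
    by (simp only: prod.distrib)
  also have "\<dots> = X^n * Y^n * (\<Prod>j\<in>{0..<n}. \<Prod>i\<in>{0..<n}. D j i)"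
    unfolding X_def Y_def prod.swap[where g="\<lambda>i j. D j i"]
    by (simp add: prod.distrib prod_power_distrib)
  finally have "(\<Prod>i\<in>{0..<n}. \<Prod>j\<in>{0..<n}. hfun \<zeta> (z i) (y j)) * dM *
      (X * Y * (\<Prod>i\<in>{0..<n}. \<Prod>j\<in>{0..<n}. (z i - y j))) =
      X^n * Y^n * ((\<Prod>j\<in>{0..<n}. \<Prod>i\<in>{0..<n}. D j i) * dM * (X * Y))"
    by (simp add: mult_ac)
  also have "\<dots> = (-1)^n * X^n * Y^n * tri_sign n * det (tvdm \<zeta> n z)"
    using det_inverse_hfun[OF G] by (simp add: D_def dM_def X_def Y_def y_def mult_ac)
  finally show ?thesis by (simp add: dM_def X_def Y_def y_def)
qed

text \<open>Apart from
  H, every factor is visibly (anti)symmetric in the 2n variables.\<close>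
lemma H0_formula:
  assumes G: "generic \<zeta> n z"
  shows "H0 \<zeta> n z * (vdm_prod (n+n) z * (\<Prod>k\<in>{0..<n+n}. z k)) =
    tri_sign n * (\<Prod>k\<in>{0..<n+n}. z k)^n * det (tvdm \<zeta> n z)"
proof -
  define y where "y = (\<lambda>j. z (n+j))"
  define X where "X = (\<Prod>i\<in>{0..<n}. z i)"
  define Y where "Y = (\<Prod>j\<in>{0..<n}. y j)"
  define C where "C = (\<Prod>i\<in>{0..<n}. \<Prod>j\<in>{0..<n}. (z i - y j))"
  define Hp where "Hp = (\<Prod>i\<in>{0..<n}. \<Prod>j\<in>{0..<n}. hfun \<zeta> (z i) (y j))"
  define dM where "dM = det (mat n n (\<lambda>(i,j). 1 / hfun \<zeta> (z i) (y j)))"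
  have num: "Hp * dM * (X * Y * C) = (-1)^n * X^n * Y^n * tri_sign n * det (tvdm \<zeta> n z)"
    using H0_numerator[OF G] by (simp add: Hp_def dM_def X_def Y_def C_def y_def)
  have dist: "z i \<noteq> z j" if "i < n+n" "j < n+n" "i \<noteq> j" for i j
    using G that by (auto simp: generic_def)
  have VX: "vdm_prod n z \<noteq> 0" and VY: "vdm_prod n y \<noteq> 0"
    by (rule vdm_prod_nonzero; use dist in \<open>force simp: y_def\<close>)+
  have "H0 \<zeta> n z = Hp / (tri_sign n * tri_sign n * (vdm_prod n z * vdm_prod n y)) * dM"
    unfolding H0_def Hp_def dM_def y_def by (simp add: prod_upper_pairs[where x=z] prod_upper_pairs[where x="\<lambda>i. z (n+i)"] mult_ac)
  hence H0_eq: "H0 \<zeta> n z = Hp * dM / (vdm_prod n z * vdm_prod n y)" by (simp add: tri_sign_square)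
  have V: "vdm_prod (n+n) z = vdm_prod n z * ((-1)^(n*n) * C) * vdm_prod n y"
    using vdm_prod_append[where n=n and z=z] prod_cross_differences[where n=n and z=z] by (simp add: C_def y_def)
  have P: "(\<Prod>k\<in>{0..<n+n}. z k) = X * Y"
    unfolding X_def Y_def y_def
    using prod.atLeastLessThan_concat[of 0 n "n+n" z] prod.shift_bounds_nat_ivl[of z 0 n n]
    by (simp add: add.commute)
  have sign: "(-1::complex)^(n*n) * (-1)^n = 1" by (simp add: power_add[symmetric])
  have "H0 \<zeta> n z * (vdm_prod (n+n) z * (\<Prod>k\<in>{0..<n+n}. z k)) = (-1)^(n*n) * (Hp * dM * (X * Y * C))"
    unfolding H0_eq V P using VX VY by (simp add: field_simps)
  also have "\<dots> = ((-1)^(n*n) * (-1)^n) * tri_sign n * (X * Y)^n * det (tvdm \<zeta> n z)"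
    unfolding num by (simp add: power_mult_distrib mult_ac)
  finally show ?thesis unfolding sign P by simp
qed

lemma generic_permute:
  assumes G: "generic \<zeta> n z" and p: "p permutes {0..<n+n}"
  shows "generic \<zeta> n (z \<circ> p)"
proof -
  have "p k < n+n" if "k < n+n" for k using permutes_in_image[OF p] that by auto
  moreover have "p i \<noteq> p j" if "i \<noteq> j" for i j using permutes_inj[OF p] that by (auto simp: inj_def)
  ultimately show ?thesis using G unfolding generic_def by auto
qed

text \<open>Symmetry of H at generic points: in the main identity, the difference product and det tvdm
  both change by the sign of the permutation, and the product of the variables is invariant.\<close>
lemma H0_permute:
  assumes G: "generic \<zeta> n z" and p: "p permutes {0..<n+n}"
  shows "H0 \<zeta> n (z \<circ> p) = H0 \<zeta> n z"
proof -
  have p_in: "p k < n+n" if "k < n+n" for k using permutes_in_image[OF p] that by auto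
  have "vdm_prod (n+n) (z \<circ> p) = det (mat (n+n) (n+n) (\<lambda>(i,j). vdm (n+n) z $$ (i, p j)))"
    unfolding det_vdm[symmetric] by (intro arg_cong[where f=det] eq_matI) (auto simp: vdm_def p_in)
  hence V: "vdm_prod (n+n) (z \<circ> p) = signof p * vdm_prod (n+n) z"
    by (simp add: det_permute_cols[OF _ p] vdm_def det_vdm[symmetric])
  have "det (tvdm \<zeta> n (z \<circ> p)) = det (mat (n+n) (n+n) (\<lambda>(i,j). tvdm \<zeta> n z $$ (i, p j)))"
    by (intro arg_cong[where f=det] eq_matI) (auto simp: tvdm_def p_in)
  hence D: "det (tvdm \<zeta> n (z \<circ> p)) = signof p * det (tvdm \<zeta> n z)"
    by (simp add: det_permute_cols[OF _ p] tvdm_def)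
  have P: "(\<Prod>k\<in>{0..<n+n}. (z \<circ> p) k) = (\<Prod>k\<in>{0..<n+n}. z k)"
    by (rule prod.permute[OF p, symmetric])
  have "signof p * (vdm_prod (n+n) z * (\<Prod>k\<in>{0..<n+n}. z k)) \<noteq> 0"
    using G by (auto simp: sign_def generic_def intro!: vdm_prod_nonzero)
  moreover have "H0 \<zeta> n (z \<circ> p) * (signof p * (vdm_prod (n+n) z * (\<Prod>k\<in>{0..<n+n}. z k))) =
      H0 \<zeta> n z * (signof p * (vdm_prod (n+n) z * (\<Prod>k\<in>{0..<n+n}. z k)))"
    using H0_formula[OF generic_permute[OF G p]] H0_formula[OF G] unfolding V D P
    by (simp add: mult_ac)
  ultimately show ?thesis by simp
qed

lemma prod_Suc_shift: "(\<Prod>i\<in>{Suc a..b}. f i) = (\<Prod>i\<in>{a..<b}. f (Suc i))"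
  by (rule prod.reindex_bij_witness[where i=Suc and j="\<lambda>i. i - 1"]) auto

lemma prod_add_shift: "(\<Prod>i\<in>{(m::nat)+a..<m+b}. f i) = (\<Prod>i\<in>{a..<b}. f (m+i))"
  using prod.shift_bounds_nat_ivl[where g=f and m=a and k=m and n=b] by (simp add: add.commute)

lemma Hfun_eq_H0: "Hfun \<zeta> m w = H0 \<zeta> m (\<lambda>k. w (Suc k))"
proof -
  have I: "{1..m} = {Suc 0..m}" and J: "{m+1..2*m} = {Suc (m+0)..m+m}"
    and I': "{i+1..m} = {Suc i..m}" and J': "{i+1..2*m} = {Suc i..m+m}" for i by auto
  have "(\<Prod>i\<in>{1..m}. \<Prod>j\<in>{m+1..2*m}. hfun \<zeta> (w i) (w j)) =
      (\<Prod>i\<in>{0..<m}. \<Prod>j\<in>{0..<m}. hfun \<zeta> (w (Suc i)) (w (Suc (m+j))))"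
    unfolding I J prod_Suc_shift prod_add_shift ..
  moreover have "(\<Prod>i\<in>{1..m}. \<Prod>j\<in>{i+1..m}. (w i - w j)) =
      (\<Prod>i\<in>{0..<m}. \<Prod>j\<in>{Suc i..<m}. (w (Suc i) - w (Suc j)))"
    unfolding I I' prod_Suc_shift ..
  moreover have "(\<Prod>i\<in>{m+1..2*m}. \<Prod>j\<in>{i+1..2*m}. (w i - w j)) =
      (\<Prod>i\<in>{0..<m}. \<Prod>j\<in>{Suc i..<m}. (w (Suc (m+i)) - w (Suc (m+j))))"
  proof -
    have "(\<Prod>i\<in>{m+1..2*m}. \<Prod>j\<in>{i+1..2*m}. (w i - w j)) =
        (\<Prod>i\<in>{m+0..<m+m}. \<Prod>j\<in>{Suc i..<m+m}. (w (Suc i) - w (Suc j)))"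
      unfolding J J' prod_Suc_shift by simp
    also have "\<dots> = (\<Prod>i\<in>{0..<m}. \<Prod>j\<in>{m + Suc i..<m+m}. (w (Suc (m+i)) - w (Suc j)))"
      by (simp only: prod_add_shift add_Suc_right)
    also have "\<dots> = (\<Prod>i\<in>{0..<m}. \<Prod>j\<in>{Suc i..<m}. (w (Suc (m+i)) - w (Suc (m+j))))"
      by (simp only: prod_add_shift)
    finally show ?thesis .
  qed
  ultimately show ?thesis unfolding Hfun_def H0_def by simp
qed

lemma permutes_shift_down:
  assumes s: "\<sigma> permutes {1..2*m}"
  shows "(\<lambda>k. \<sigma> (Suc k) - 1) permutes {0..<m+m}" and "Suc (\<sigma> (Suc k) - 1) = \<sigma> (Suc k)"
proof -
  have fix_out: "\<And>x. x \<notin> {1..2*m} \<Longrightarrow> \<sigma> x = x" and ex1: "\<And>y. \<exists>!x. \<sigma> x = y"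
    using s unfolding permutes_def by blast+
  have pos: "\<sigma> (Suc k) \<ge> 1" for k
    using permutes_in_image[OF s, of "Suc k"] fix_out[of "Suc k"] by (cases "Suc k \<in> {1..2*m}") auto
  thus suc: "Suc (\<sigma> (Suc k) - 1) = \<sigma> (Suc k)" for k using pos[of k] by arith
  show "(\<lambda>k. \<sigma> (Suc k) - 1) permutes {0..<m+m}"
    unfolding permutes_def
  proof (intro conjI allI impI)
    fix x assume "x \<notin> {0..<m+m}"
    thus "\<sigma> (Suc x) - 1 = x" using fix_out[of "Suc x"] by auto
  next
    fix y
    obtain a where a: "\<sigma> a = Suc y" using ex1 by blast
    have "a \<noteq> 0" using a fix_out[of 0] by (metis atLeastAtMost_iff nat.distinct(1) not_one_le_zero)
    then obtain x where x: "a = Suc x" by (cases a) auto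
    show "\<exists>!x. \<sigma> (Suc x) - 1 = y"
    proof (rule ex1I[of _ x])
      show "\<sigma> (Suc x) - 1 = y" using a x by simp
    next
      fix x' assume "\<sigma> (Suc x') - 1 = y"
      hence "\<sigma> (Suc x') = Suc y" using suc[of x'] by simp
      thus "x' = x" using a x ex1[of "Suc y"] by blast
    qed
  qed
qed

text \<open>Continuity: where H_{2m} is defined it is continuous along every complex line through the
  point; the determinant is expanded as a sum over permutations to see this.\<close>
lemma Hfun_expand:
  "Hfun \<zeta> m w =
   (\<Prod>i\<in>{1..m}. \<Prod>j\<in>{m+1..2*m}. hfun \<zeta> (w i) (w j))
     / ((\<Prod>i\<in>{1..m}. \<Prod>j\<in>{i+1..m}. (w i - w j)) * (\<Prod>i\<in>{m+1..2*m}. \<Prod>j\<in>{i+1..2*m}. (w i - w j)))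
     * (\<Sum>p\<in>{p. p permutes {0..<m}}. signof p * (\<Prod>i\<in>{0..<m}. 1 / hfun \<zeta> (w (i+1)) (w (m + p i + 1))))"
proof -
  have "det (mat m m (\<lambda>(i, j). 1 / hfun \<zeta> (w (i + 1)) (w (m + j + 1)))) =
    (\<Sum>p\<in>{p. p permutes {0..<m}}. signof p * (\<Prod>i\<in>{0..<m}. 1 / hfun \<zeta> (w (i+1)) (w (m + p i + 1))))"
    by (subst det_def'[of _ m]) (auto intro!: sum.cong prod.cong simp: permutes_in_image)
  thus ?thesis unfolding Hfun_def by simp
qed

lemma Hfun_tendsto_along_line:
  assumes H: "H_defined \<zeta> m w"
  shows "((\<lambda>t. Hfun \<zeta> m (\<lambda>k. w k + t * v k)) \<longlongrightarrow> Hfun \<zeta> m w) (at 0)"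
proof -
  let ?w = "\<lambda>t k. w k + t * v k"
  have h_cont: "isCont (\<lambda>t. hfun \<zeta> (?w t i) (?w t j)) 0" for i j
    unfolding hfun_def by (intro continuous_intros)
  have denominator: "(\<Prod>i\<in>{1..m}. \<Prod>j\<in>{i+1..m}. (?w 0 i - ?w 0 j))
        * (\<Prod>i\<in>{m+1..2*m}. \<Prod>j\<in>{i+1..2*m}. (?w 0 i - ?w 0 j)) \<noteq> 0"
    using H unfolding H_defined_def by (auto simp: prod_zero_iff)
  have det_cont: "isCont (\<lambda>t. \<Sum>p\<in>{p. p permutes {0..<m}}.
      signof p * (\<Prod>i\<in>{0..<m}. 1 / hfun \<zeta> (?w t (i+1)) (?w t (m + p i + 1)))) 0"
  proof (intro isCont_sum ballI continuous_intros isCont_divide h_cont)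
    fix p i assume p: "p \<in> {p. p permutes {0..<m}}" and i: "i \<in> {0..<m}"
    have "p i < m" using p i permutes_in_image by fastforce
    thus "hfun \<zeta> (?w 0 (i+1)) (?w 0 (m + p i + 1)) \<noteq> 0"
      using H i unfolding H_defined_def by auto
  qed
  have "isCont (\<lambda>t. Hfun \<zeta> m (?w t)) 0"
    unfolding Hfun_expand
    by (intro isCont_mult isCont_divide continuous_prod h_cont det_cont denominator continuous_intros)
  thus ?thesis by (simp add: isCont_def)
qed

lemma eventually_poly_nonzero:
  fixes p :: "complex poly"
  assumes "p \<noteq> 0"
  shows "eventually (\<lambda>t. poly p t \<noteq> 0) (at x)"
proof -
  have "eventually (\<lambda>t. \<forall>s\<in>{s. poly p s = 0}. t \<noteq> s) (at x)"
    by (rule eventually_ball_finite[OF poly_roots_finite[OF assms]]) (auto intro: eventually_neq_at_within)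
  thus ?thesis by (rule eventually_mono) auto
qed

lemma eventually_linear_nonzero:
  fixes a b :: complex
  assumes "b \<noteq> 0"
  shows "eventually (\<lambda>t. a + t * b \<noteq> 0) (at 0)"
  using eventually_poly_nonzero[of "[:a, b:]" 0] assms by (simp add: algebra_simps)

text \<open>Along the line (alpha + t a, beta + t b) the kernel h is a cubic in t, whose t^3 coefficient is
  (1 - zeta^2) a b (a + b) and whose t^2 coefficient is -4 a b when zeta^2 = 1.\<close>
lemma hfun_on_line:
  "hfun \<zeta> (\<alpha> + t * a) (\<beta> + t * b) =
   poly [: 1 - (3+\<zeta>^2) * \<alpha> * \<beta> + (1-\<zeta>^2) * \<alpha> * \<beta> * (\<alpha> + \<beta>),
          - (3+\<zeta>^2) * (\<alpha> * b + \<beta> * a) + (1-\<zeta>^2) * (\<alpha> * \<beta> * (a + b) + (\<alpha> * b + \<beta> * a) * (\<alpha> + \<beta>)),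
          - (3+\<zeta>^2) * a * b + (1-\<zeta>^2) * ((\<alpha> * b + \<beta> * a) * (a + b) + a * b * (\<alpha> + \<beta>)),
          (1-\<zeta>^2) * a * b * (a + b) :] t"
  by (simp add: hfun_def algebra_simps power2_eq_square)

lemma eventually_hfun_nonzero:
  fixes a b :: complex
  assumes "a \<noteq> 0" "b \<noteq> 0" "a + b \<noteq> 0"
  shows "eventually (\<lambda>t. hfun \<zeta> (\<alpha> + t * a) (\<beta> + t * b) \<noteq> 0) (at 0)"
proof -
  let ?p = "[: 1 - (3+\<zeta>^2) * \<alpha> * \<beta> + (1-\<zeta>^2) * \<alpha> * \<beta> * (\<alpha> + \<beta>),
          - (3+\<zeta>^2) * (\<alpha> * b + \<beta> * a) + (1-\<zeta>^2) * (\<alpha> * \<beta> * (a + b) + (\<alpha> * b + \<beta> * a) * (\<alpha> + \<beta>)),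
          - (3+\<zeta>^2) * a * b + (1-\<zeta>^2) * ((\<alpha> * b + \<beta> * a) * (a + b) + a * b * (\<alpha> + \<beta>)),
          (1-\<zeta>^2) * a * b * (a + b) :]"
  have "?p \<noteq> 0"
  proof (cases "1 - \<zeta>^2 = 0")
    case True
    hence "coeff ?p 2 = -4 * a * b" by (simp add: numeral_eq_Suc)
    thus ?thesis using assms by auto
  next
    case False
    have "coeff ?p 3 = (1-\<zeta>^2) * a * b * (a + b)" by (simp add: numeral_eq_Suc)
    thus ?thesis using assms False by auto
  qed
  from eventually_poly_nonzero[OF this] show ?thesis by (simp only: hfun_on_line)
qed

lemma generic_perturbation:
  "eventually (\<lambda>t. generic \<zeta> n (\<lambda>k. w (Suc k) + t * of_nat (Suc k))) (at 0)"
proof -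
  let ?z = "\<lambda>t k. w (Suc k) + t * of_nat (Suc k)"
  have pair: "eventually (\<lambda>t. ?z t i \<noteq> 0 \<and> (i \<noteq> j \<longrightarrow> ?z t i \<noteq> ?z t j)
      \<and> hfun \<zeta> (?z t i) (?z t j) \<noteq> 0) (at 0)" for i j
  proof (intro eventually_conj)
    show "eventually (\<lambda>t. ?z t i \<noteq> 0) (at 0)"
      by (rule eventually_linear_nonzero) (simp del: of_nat_Suc)
    have "eventually (\<lambda>t. (w (Suc i) - w (Suc j)) + t * (of_nat (Suc i) - of_nat (Suc j)) \<noteq> 0) (at 0)"
      if "i \<noteq> j" by (rule eventually_linear_nonzero) (use that in simp)
    thus "eventually (\<lambda>t. i \<noteq> j \<longrightarrow> ?z t i \<noteq> ?z t j) (at 0)"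
      by (cases "i = j") (auto elim: eventually_mono simp: algebra_simps)
    have "(of_nat (Suc i) :: complex) + of_nat (Suc j) \<noteq> 0"
      by (metis of_nat_add of_nat_eq_0_iff add_is_0 nat.distinct(1))
    thus "eventually (\<lambda>t. hfun \<zeta> (?z t i) (?z t j) \<noteq> 0) (at 0)"
      by (intro eventually_hfun_nonzero) (auto simp del: of_nat_Suc)
  qed
  have "eventually (\<lambda>t. \<forall>(i,j)\<in>{0..<n+n} \<times> {0..<n+n}. ?z t i \<noteq> 0 \<and> (i \<noteq> j \<longrightarrow> ?z t i \<noteq> ?z t j)
      \<and> hfun \<zeta> (?z t i) (?z t j) \<noteq> 0) (at 0)"
    by (rule eventually_ball_finite) (use pair in auto)
  thus ?thesis
  proof (rule eventually_mono)
    fix t assume all: "\<forall>(i,j)\<in>{0..<n+n} \<times> {0..<n+n}. ?z t i \<noteq> 0 \<and> (i \<noteq> j \<longrightarrow> ?z t i \<noteq> ?z t j)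
      \<and> hfun \<zeta> (?z t i) (?z t j) \<noteq> 0"
    show "generic \<zeta> n (?z t)" unfolding generic_def
    proof (intro conjI allI impI)
      fix k assume "k < n+n" thus "?z t k \<noteq> 0" using all by auto
    next
      fix i j assume ij: "i < n+n" "j < n+n" "i \<noteq> j"
      show "?z t i \<noteq> ?z t j" using all ij by auto
      show "tfun \<zeta> (?z t i) \<noteq> tfun \<zeta> (?z t j)"
        by (rule tfun_inj_on_pair) (use all ij in auto)
    qed
  qed
qed

text \<open>The theorem: along the line w + t (0, 1, ..., 2m) both sides agree for small t \<noteq> 0 by
  symmetry at generic points, and they converge to the two sides at t = 0 by continuity.\<close>
theorem mainTheorem2:
  fixes \<zeta> :: complex and m :: nat and w :: "nat \<Rightarrow> complex" and \<sigma> :: "nat \<Rightarrow> nat"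
  assumes "m \<ge> 1"
    and "\<sigma> permutes {1..2*m}"
    and "H_defined \<zeta> m w"
    and "H_defined \<zeta> m (w \<circ> \<sigma>)"
  shows "Hfun \<zeta> m (w \<circ> \<sigma>) = Hfun \<zeta> m w"
proof -
  define wt where "wt t = (\<lambda>k. w k + t * of_nat k)" for t :: complex
  define \<pi> where "\<pi> k = \<sigma> (Suc k) - 1" for k
  have \<pi>: "\<pi> permutes {0..<m+m}" and shift: "\<And>k. Suc (\<pi> k) = \<sigma> (Suc k)"
    unfolding \<pi>_def using permutes_shift_down[OF assms(2)] by auto
  have near: "eventually (\<lambda>t. Hfun \<zeta> m (wt t) = Hfun \<zeta> m (wt t \<circ> \<sigma>)) (at 0)"
    using generic_perturbation[of \<zeta> m w]
  proof (rule eventually_mono)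
    fix t assume "generic \<zeta> m (\<lambda>k. w (Suc k) + t * of_nat (Suc k))"
    hence "H0 \<zeta> m ((\<lambda>k. wt t (Suc k)) \<circ> \<pi>) = H0 \<zeta> m (\<lambda>k. wt t (Suc k))"
      by (intro H0_permute \<pi>) (simp add: wt_def)
    thus "Hfun \<zeta> m (wt t) = Hfun \<zeta> m (wt t \<circ> \<sigma>)"
      by (simp add: Hfun_eq_H0 comp_def shift)
  qed
  have "((\<lambda>t. Hfun \<zeta> m (wt t)) \<longlongrightarrow> Hfun \<zeta> m w) (at 0)"
    unfolding wt_def by (rule Hfun_tendsto_along_line[OF assms(3)])
  hence "((\<lambda>t. Hfun \<zeta> m (wt t \<circ> \<sigma>)) \<longlongrightarrow> Hfun \<zeta> m w) (at 0)"
    using near by (rule Lim_transform_eventually)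
  moreover have "((\<lambda>t. Hfun \<zeta> m (wt t \<circ> \<sigma>)) \<longlongrightarrow> Hfun \<zeta> m (w \<circ> \<sigma>)) (at 0)"
    using Hfun_tendsto_along_line[OF assms(4), of "\<lambda>k. of_nat (\<sigma> k)"] by (simp add: wt_def comp_def)
  ultimately show ?thesis by (rule tendsto_unique[OF at_neq_bot, symmetric])
qed

end
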